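(* Let $c>0$ and $v\in\mathbb{R}^d$. For $i=1,\dots,m$ let $u_i\in\mathbb{R}^d$ and let $p_i$ be a probability density on $\mathbb{R}^d$ of the form $p_i(y)=\phi_i(\|y-u_i\|)$ for some function $\phi_i$. Suppose $v=\sum_{i=1}^m w_iu_i$ with $w_i\ge0$, $\sum_{i=1}^m w_i=1$, and $\langle u_i,v\rangle\ge0$ for all $i$. Let $\xi$ have the zero-mean mixture density $p'(\xi)=\sum_{i=1}^m w_i\,p_i(\xi+v)$ (i.e. $v+\xi$ has density $\sum_i w_ip_i$), and let $g=\mathrm{clip}(v+\xi,c)$. Then $$\mathbb{E}_{\xi\sim p'}[\langle v,g\rangle]\ge\|v\|\sum_{i=1}^m w_i\min\left(\|u_i\|,\frac34c\right)\cos(v,u_i)\,\mathbb{P}_{y\sim p_i}\left(\|y-u_i\|<\frac c4\right)\ge0.$$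
   Context: For $g\in\mathbb{R}^d$ and $c>0$, $\mathrm{clip}(g,c)=g\cdot\min\left(1,\frac{c}{\|g\|}\right)$ (with $\mathrm{clip}(0,c)=0$). $\cos(a,b)=\langle a,b\rangle/(\|a\|\|b\|)$ (terms in which $a$ or $b$ is zero are taken to be $0$). In the paper $v$ is the true gradient $\nabla f(x_t)$. *)

theory Defs
  imports "HOL-Analysis.Analysis"
begin

definition clip :: "'a::real_normed_vector \<Rightarrow> real \<Rightarrow> 'a" where
  "clip g c = (if g = 0 then 0 else min 1 (c / norm g) *\<^sub>R g)"

definition vcos :: "'a::real_inner \<Rightarrow> 'a \<Rightarrow> real" where
  "vcos a b = (if a = 0 \<or> b = 0 then 0 else inner a b / (norm a * norm b))"

end

theory Submission
  imports Defs
begin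

(*
  Expand the mixture. Each p_i is the density of a finite measure invariant under every
  isometry fixing u_i, because Lebesgue measure is invariant under orthogonal maps (Vitali:
  cover an open set by disjoint balls up to a null set; such maps send balls to balls of the
  same radius). For such a measure put J w = E <w, clip y c>.

  Reflection H in the line R u fixes the measure and commutes with clipping, so J v = J (H v);
  as v + H v is a multiple of u, J v = <u,v> / |u|^2 * J u.

  Reflection through the point u pairs u + z with u - z. For a unit vector e the e-component of
  clip (s e + z) c is nondecreasing in s, hence <u, clip (u + z) c> + <u, clip (u - z) c> >= 0,
  and for |z| <= c/4 it is at least 2 |u| b with b = min(|u|, 3c/4), since b e + z and b e - z
  have norm at most c and are not clipped. So J u >= |u| b P(|y - u| < c/4).
*)

section \<open>Clipping\<close>

lemma inner_clip: "inner a (clip y c) = inner a y * min 1 (c / norm y)"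
  by (simp add: clip_def)

lemma clip_eq_self: "norm y \<le> c \<Longrightarrow> clip y c = y"
  by (auto simp: clip_def divide_simps)

lemma clip_uminus: "clip (- y) c = - clip y c"
  by (simp add: clip_def)

lemma norm_clip_le: "norm (clip y c) \<le> \<bar>c\<bar>"
  by (auto simp: clip_def abs_mult min_def divide_simps)

lemma borel_measurable_clip [measurable]:
  "(\<lambda>y::'a::euclidean_space. clip y c) \<in> borel_measurable borel"
  unfolding clip_def by measurable

lemma clip_orthogonal_transformation:
  fixes f :: "'a::euclidean_space \<Rightarrow> 'a"
  assumes "orthogonal_transformation f"
  shows "clip (f y) c = f (clip y c)"
  using assms
  by (simp add: clip_def orthogonal_transformation_norm orthogonal_transformation_scaleR
      linear_0 orthogonal_transformation_linear orthogonal_transformation_inj inj_eq[symmetric, of f y 0])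

(* The component along a unit vector e of clip y c, where x is the e-component of y and q the
   squared norm of the component of y orthogonal to e. *)
definition clip_profile :: "real \<Rightarrow> real \<Rightarrow> real \<Rightarrow> real" where
  "clip_profile c q x = x * min 1 (c / sqrt (x\<^sup>2 + q))"

lemma clip_profile_minus: "clip_profile c q (- x) = - clip_profile c q x"
  by (simp add: clip_profile_def)

lemma clip_profile_mono_nonneg:
  assumes c: "0 \<le> c" and q: "0 \<le> q" and xy: "0 \<le> x" "x \<le> y"
  shows "clip_profile c q x \<le> clip_profile c q y"
proof -
  have min_form: "clip_profile c q t = min t (c * (t / sqrt (t\<^sup>2 + q)))" if "0 \<le> t" for t
    using that unfolding clip_profile_def min_mult_distrib_left by (simp add: ac_simps)
  show ?thesis
  proof (cases "x = 0")
    case True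
    then show ?thesis
      using c q xy by (simp add: clip_profile_def)
  next
    case False
    then have pos: "0 < x\<^sup>2 + q" "0 < y\<^sup>2 + q"
      using q xy by (simp_all add: add_pos_nonneg)
    have "q * x\<^sup>2 \<le> q * y\<^sup>2"
      using q xy by (simp add: mult_left_mono power_mono)
    then have "x\<^sup>2 * (y\<^sup>2 + q) \<le> y\<^sup>2 * (x\<^sup>2 + q)"
      by (simp add: algebra_simps)
    then have "x\<^sup>2 / (x\<^sup>2 + q) \<le> y\<^sup>2 / (y\<^sup>2 + q)"
      using pos by (simp add: le_divide_eq divide_le_eq mult.commute)
    then have "(x / sqrt (x\<^sup>2 + q))\<^sup>2 \<le> (y / sqrt (y\<^sup>2 + q))\<^sup>2"
      using pos by (simp add: power_divide)
    moreover have "0 \<le> y / sqrt (y\<^sup>2 + q)"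
      using q xy by simp
    ultimately have "x / sqrt (x\<^sup>2 + q) \<le> y / sqrt (y\<^sup>2 + q)"
      by (rule power2_le_imp_le)
    then have "c * (x / sqrt (x\<^sup>2 + q)) \<le> c * (y / sqrt (y\<^sup>2 + q))"
      using c by (rule mult_left_mono)
    with xy show ?thesis
      unfolding min_form[OF xy(1)] min_form[OF order_trans[OF xy]] by (intro min.mono)
  qed
qed

lemma mono_clip_profile:
  assumes "0 \<le> c" "0 \<le> q"
  shows "mono (clip_profile c q)"
proof
  fix x y :: real
  assume "x \<le> y"
  consider "0 \<le> x" | "y \<le> 0" | "x < 0" "0 < y" by linarith
  then show "clip_profile c q x \<le> clip_profile c q y"
  proof cases
    case 1
    with \<open>x \<le> y\<close> show ?thesis using assms clip_profile_mono_nonneg by blast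
  next
    case 2
    with \<open>x \<le> y\<close> have "clip_profile c q (- y) \<le> clip_profile c q (- x)"
      using assms by (intro clip_profile_mono_nonneg) auto
    then show ?thesis by (simp add: clip_profile_minus)
  next
    case 3
    then have "clip_profile c q 0 \<le> clip_profile c q (- x)" "clip_profile c q 0 \<le> clip_profile c q y"
      using assms by (auto intro: clip_profile_mono_nonneg)
    then show ?thesis by (simp add: clip_profile_minus clip_profile_def)
  qed
qed

lemma inner_clip_along_unit:
  fixes e z :: "'a::real_inner"
  assumes e: "norm e = 1"
  shows "inner e (clip (s *\<^sub>R e + z) c)
           = clip_profile c ((norm z)\<^sup>2 - (inner e z)\<^sup>2) (s + inner e z)"
proof -
  have ee: "inner e e = 1"
    using e by (simp add: power2_norm_eq_inner[symmetric])
  have "(norm (s *\<^sub>R e + z))\<^sup>2 = (s + inner e z)\<^sup>2 + ((norm z)\<^sup>2 - (inner e z)\<^sup>2)"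
    unfolding power2_norm_eq_inner
    by (simp add: inner_add_left inner_add_right inner_commute[of z e] ee power2_eq_square algebra_simps)
  then have "norm (s *\<^sub>R e + z) = sqrt ((s + inner e z)\<^sup>2 + ((norm z)\<^sup>2 - (inner e z)\<^sup>2))"
    by (metis norm_ge_zero real_sqrt_unique)
  moreover have "inner e (s *\<^sub>R e + z) = s + inner e z"
    by (simp add: inner_add_right ee)
  ultimately show ?thesis
    by (simp add: inner_clip clip_profile_def)
qed

lemma mono_inner_clip_along_unit:
  fixes e z :: "'a::real_inner"
  assumes "norm e = 1" "0 \<le> c"
  shows "mono (\<lambda>s. inner e (clip (s *\<^sub>R e + z) c))"
proof -
  have "\<bar>inner e z\<bar> \<le> norm z"
    using Cauchy_Schwarz_ineq2[of e z] assms(1) by simp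
  then have "(inner e z)\<^sup>2 \<le> (norm z)\<^sup>2"
    by (simp add: power2_le_iff_abs_le)
  then have "mono (clip_profile c ((norm z)\<^sup>2 - (inner e z)\<^sup>2))"
    using assms by (intro mono_clip_profile) auto
  then show ?thesis
    unfolding inner_clip_along_unit[OF assms(1)] by (auto simp: mono_def)
qed

lemma inner_clip_add_diff_nonneg:
  fixes u z :: "'a::real_inner"
  assumes "0 \<le> c"
  shows "0 \<le> inner u (clip (u + z) c) + inner u (clip (u - z) c)"
proof (cases "u = 0")
  case False
  define e where "e = (1 / norm u) *\<^sub>R u"
  have e: "norm e = 1" and ue: "norm u *\<^sub>R e = u"
    using False by (simp_all add: e_def)
  have inner_u: "inner u x = norm u * inner e x" for x
    by (metis ue inner_scaleR_left)
  define h where "h s = inner e (clip (s *\<^sub>R e + z) c)" for s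
  have "h (- norm u) \<le> h (norm u)"
    unfolding h_def by (rule monoD[OF mono_inner_clip_along_unit[OF e assms]]) simp
  moreover have "inner u (clip (u + z) c) = norm u * h (norm u)"
    by (simp add: h_def ue inner_u)
  moreover have "inner u (clip (u - z) c) = - norm u * h (- norm u)"
    using clip_uminus[of "z - u" c] by (simp add: h_def ue inner_u)
  ultimately show ?thesis
    by (simp add: mult_left_mono flip: right_diff_distrib)
qed simp

lemma inner_clip_add_diff_ge:
  fixes u z :: "'a::real_inner"
  assumes z: "norm z \<le> c / 4"
  shows "2 * norm u * min (norm u) (3/4 * c) \<le> inner u (clip (u + z) c) + inner u (clip (u - z) c)"
proof -
  have c: "0 \<le> c"
    using z norm_ge_zero[of z] by linarith
  show ?thesis
  proof (cases "u = 0")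
    case False
    define e where "e = (1 / norm u) *\<^sub>R u"
    have e: "norm e = 1" and ue: "norm u *\<^sub>R e = u"
      using False by (simp_all add: e_def)
    have inner_u: "inner u x = norm u * inner e x" for x
      by (metis ue inner_scaleR_left)
    define b where "b = min (norm u) (3/4 * c)"
    have b: "0 \<le> b" "b \<le> norm u" "b \<le> 3/4 * c"
      using c by (auto simp: b_def)
    have along_ge: "b + inner e y \<le> inner e (clip (u + y) c)" if "norm y \<le> c / 4" for y
    proof -
      have "norm (b *\<^sub>R e + y) \<le> c"
        using norm_triangle_ineq[of "b *\<^sub>R e" y] that b e by simp
      then have "b + inner e y = inner e (clip (b *\<^sub>R e + y) c)"
        using e by (simp add: clip_eq_self inner_add_right power2_norm_eq_inner[symmetric])
      also have "\<dots> \<le> inner e (clip (norm u *\<^sub>R e + y) c)"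
        by (rule monoD[OF mono_inner_clip_along_unit[OF e c]]) (fact b)
      finally show ?thesis
        by (simp add: ue)
    qed
    have "2 * b \<le> inner e (clip (u + z) c) + inner e (clip (u - z) c)"
      using along_ge[of z] along_ge[of "- z"] z by simp
    then have "norm u * (2 * b) \<le> norm u * (inner e (clip (u + z) c) + inner e (clip (u - z) c))"
      by (simp add: mult_left_mono)
    then show ?thesis
      by (simp add: inner_u b_def algebra_simps)
  qed simp
qed

section \<open>Invariance of Lebesgue measure under orthogonal maps\<close>

lemma borel_measurable_orthogonal_transformation:
  fixes f :: "'a::euclidean_space \<Rightarrow> 'a"
  assumes "orthogonal_transformation f"
  shows "f \<in> borel_measurable borel"
  using assms
  by (intro borel_measurable_continuous_onI linear_continuous_on)
     (metis orthogonal_transformation_linear linear_conv_bounded_linear)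

lemma vimage_orthogonal_transformation:
  fixes f :: "'a::euclidean_space \<Rightarrow> 'a"
  assumes "orthogonal_transformation f"
  shows "f -` A = inv f ` A"
  using assms by (simp add: bij_vimage_eq_inv_image orthogonal_transformation_bij)

lemma null_sets_lborel_orthogonal_vimage:
  fixes f :: "'a::euclidean_space \<Rightarrow> 'a"
  assumes f: "orthogonal_transformation f" and N: "negligible N" "N \<in> sets borel"
  shows "f -` N \<in> null_sets lborel"
proof -
  have "negligible (inv f ` N)"
    using N(1) orthogonal_transformation_inv[OF f]
    by (intro negligible_differentiable_image_negligible linear_imp_differentiable_on)
       (auto simp: orthogonal_transformation_linear)
  moreover have "f -` N \<in> sets borel"
    using measurable_sets[OF borel_measurable_orthogonal_transformation[OF f] N(2)] by simp
  ultimately show ?thesis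
    by (simp add: vimage_orthogonal_transformation[OF f] negligible_iff_null_sets null_sets_completion_iff)
qed

lemma emeasure_lborel_orthogonal_vimage_cball:
  fixes f :: "'a::euclidean_space \<Rightarrow> 'a"
  assumes f: "orthogonal_transformation f"
  shows "emeasure lborel (f -` cball x r) = emeasure lborel (cball (0::'a) r)"
proof -
  have "f -` cball x r = cball (inv f x) r"
    using orthogonal_transformation_inv[OF f]
    by (simp add: vimage_orthogonal_transformation[OF f] image_orthogonal_transformation_cball)
  then show ?thesis
    by (cases "r < 0") (simp_all add: emeasure_cball)
qed

lemma emeasure_lborel_orthogonal_vimage_open:
  fixes f :: "'a::euclidean_space \<Rightarrow> 'a"
  assumes "orthogonal_transformation f" and "open U"
  shows "emeasure lborel (f -` U) = emeasure lborel U"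
proof -
  define K where "K = {(x, r). 0 < r \<and> cball x r \<subseteq> U}"
  obtain C where C: "countable C" "C \<subseteq> K"
    and disj: "pairwise (\<lambda>i j. disjnt (cball (fst i) (snd i)) (cball (fst j) (snd j))) C"
    and neg: "negligible (U - (\<Union>i\<in>C. cball (fst i) (snd i)))"
  proof (rule Vitali_covering_theorem_cballs[of K snd U fst])
    show "0 < snd i" if "i \<in> K" for i
      using that by (auto simp: K_def)
  next
    fix x and d :: real
    assume "x \<in> U" "0 < d"
    then obtain e where "0 < e" "cball x e \<subseteq> U"
      using \<open>open U\<close> open_contains_cball by blast
    with \<open>0 < d\<close> show "\<exists>i. i \<in> K \<and> x \<in> cball (fst i) (snd i) \<and> snd i < d"
      by (intro exI[of _ "(x, min e (d / 2))"]) (auto simp: K_def)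
  qed
  define N where "N = U - (\<Union>i\<in>C. cball (fst i) (snd i))"
  have "cball (fst i) (snd i) \<subseteq> U" if "i \<in> C" for i
    using C(2) that by (force simp: K_def)
  then have U: "U = (\<Union>i\<in>C. cball (fst i) (snd i)) \<union> N"
    unfolding N_def by blast
  have N: "negligible N" "N \<in> sets borel"
    using neg C(1) \<open>open U\<close> by (auto simp: N_def intro!: sets.countable_UN'')
  have measure_eq: "emeasure lborel (g -` U) = (\<integral>\<^sup>+i. emeasure lborel (cball (0::'a) (snd i)) \<partial>count_space C)"
    if g: "orthogonal_transformation g" for g :: "'a \<Rightarrow> 'a"
  proof -
    have g_meas: "g \<in> borel_measurable borel"
      using g by (rule borel_measurable_orthogonal_transformation)
    have "g -` U = (\<Union>i\<in>C. g -` cball (fst i) (snd i)) \<union> g -` N"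
      by (subst U) auto
    moreover have "(\<Union>i\<in>C. g -` cball (fst i) (snd i)) \<in> sets lborel"
      using C(1) measurable_sets[OF g_meas] by (intro sets.countable_UN'') auto
    ultimately have "emeasure lborel (g -` U) = emeasure lborel (\<Union>i\<in>C. g -` cball (fst i) (snd i))"
      using null_sets_lborel_orthogonal_vimage[OF g N] by (simp add: emeasure_Un_null_set)
    also have "\<dots> = (\<integral>\<^sup>+i. emeasure lborel (g -` cball (fst i) (snd i)) \<partial>count_space C)"
    proof (rule emeasure_UN_countable)
      show "disjoint_family_on (\<lambda>i. g -` cball (fst i) (snd i)) C"
        using disj unfolding disjoint_family_on_def pairwise_def disjnt_def by (auto simp flip: vimage_Int)
    qed (use C(1) measurable_sets[OF g_meas] in auto)
    finally show ?thesis
      by (simp add: emeasure_lborel_orthogonal_vimage_cball[OF g])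
  qed
  from measure_eq[OF assms(1)] measure_eq[of "\<lambda>x. x"] show ?thesis
    by simp
qed

lemma lborel_distr_orthogonal_transformation:
  fixes f :: "'a::euclidean_space \<Rightarrow> 'a"
  assumes "orthogonal_transformation f"
  shows "distr lborel borel f = lborel"
proof (rule measure_eqI_generator_eq[where \<Omega>=UNIV and E="{U. open U}" and A="\<lambda>n. ball 0 (real n)"])
  have [measurable]: "f \<in> borel_measurable borel"
    using assms by (rule borel_measurable_orthogonal_transformation)
  show "emeasure (distr lborel borel f) U = emeasure lborel U" if "U \<in> {U. open U}" for U
    using that emeasure_lborel_orthogonal_vimage_open[OF assms] by (simp add: emeasure_distr)
  then show "emeasure (distr lborel borel f) (ball 0 (real n)) \<noteq> \<infinity>" for n
    using emeasure_lborel_ball_finite[of "0::'a" "real n"] by simp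
qed (auto simp: Int_stable_def borel_def intro: reals_Archimedean2)

section \<open>Clipped gradients under isotropic measures\<close>

(* For u = 0 the division by zero makes this x \<mapsto> - x, which is still orthogonal. *)
definition line_reflection :: "'a::real_inner \<Rightarrow> 'a \<Rightarrow> 'a" where
  "line_reflection u x = (2 * inner x u / (norm u)\<^sup>2) *\<^sub>R u - x"

lemma orthogonal_transformation_line_reflection:
  "orthogonal_transformation (line_reflection (u::'a::euclidean_space))"
  unfolding orthogonal_transformation_def
proof safe
  show "linear (line_reflection u)"
    by (intro linearI) (simp_all add: line_reflection_def inner_add_left add_divide_distrib scaleR_add_left
        scaleR_diff_right mult.left_commute[of 2])
  fix v w :: 'a
  define a where "a = 2 * inner v u / (norm u)\<^sup>2"
  define b where "b = 2 * inner w u / (norm u)\<^sup>2"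
  have "a * (b * inner u u) = 2 * a * inner w u"
    by (cases "u = 0") (simp_all add: b_def power2_norm_eq_inner)
  moreover have "b * inner v u = a * inner w u"
    by (simp add: a_def b_def)
  moreover have "inner (line_reflection u v) (line_reflection u w) = inner (a *\<^sub>R u - v) (b *\<^sub>R u - w)"
    by (simp add: line_reflection_def a_def b_def)
  moreover have "\<dots> = a * (b * inner u u) - a * inner u w - b * inner v u + inner v w"
    by (simp add: inner_diff_left inner_diff_right inner_commute[of w v] algebra_simps)
  ultimately show "inner (line_reflection u v) (line_reflection u w) = inner v w"
    by (simp add: inner_commute[of u w])
qed

lemma line_reflection_self: "line_reflection u u = u"
  by (cases "u = 0") (simp_all add: line_reflection_def power2_norm_eq_inner scaleR_2)

lemma inner_line_reflection_commute: "inner v (line_reflection u x) = inner (line_reflection u v) x"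
  by (simp add: line_reflection_def inner_diff_left inner_diff_right inner_commute)

lemma add_line_reflection: "v + line_reflection u v = (2 * inner v u / (norm u)\<^sup>2) *\<^sub>R u"
  by (simp add: line_reflection_def)

definition isotropic_about :: "'a::euclidean_space \<Rightarrow> 'a measure \<Rightarrow> bool" where
  "isotropic_about u M \<longleftrightarrow>
     (\<forall>f. orthogonal_transformation f \<longrightarrow> distr M borel (\<lambda>x. u + f (x - u)) = M)"

lemma sets_isotropic_about: "isotropic_about u M \<Longrightarrow> sets M = sets borel"
  unfolding isotropic_about_def by (metis orthogonal_transformation_id sets_distr)

lemma isotropic_about_lborel: "isotropic_about (u::'a::euclidean_space) lborel"
  unfolding isotropic_about_def
proof safe
  fix f :: "'a \<Rightarrow> 'a"
  assume f: "orthogonal_transformation f"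
  have [measurable]: "f \<in> borel_measurable borel"
    using f by (rule borel_measurable_orthogonal_transformation)
  have "(\<lambda>x. u + f (x - u)) = (+) (u - f u) \<circ> f"
    using linear_diff[OF orthogonal_transformation_linear[OF f]] by (auto simp: fun_eq_iff)
  then have "distr lborel borel (\<lambda>x. u + f (x - u)) = distr (distr lborel borel f) borel ((+) (u - f u))"
    by (simp add: distr_distr)
  then show "distr lborel borel (\<lambda>x. u + f (x - u)) = lborel"
    by (simp add: lborel_distr_orthogonal_transformation[OF f] lborel_distr_plus)
qed

lemma isotropic_about_radial_density:
  fixes p :: "'a::euclidean_space \<Rightarrow> ennreal"
  assumes [measurable]: "p \<in> borel_measurable borel"
    and radial: "\<And>y. p y = \<phi> (norm (y - u))"
  shows "isotropic_about u (density lborel p)"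
  unfolding isotropic_about_def
proof safe
  fix f :: "'a \<Rightarrow> 'a"
  assume f: "orthogonal_transformation f"
  have [measurable]: "f \<in> borel_measurable borel"
    using f by (rule borel_measurable_orthogonal_transformation)
  have "p (u + f (x - u)) = p x" for x
    using f by (simp add: radial orthogonal_transformation_norm)
  then have "density lborel p = density lborel (\<lambda>x. p (u + f (x - u)))"
    by simp
  then have "distr (density lborel p) borel (\<lambda>x. u + f (x - u))
      = density (distr lborel borel (\<lambda>x. u + f (x - u))) p"
    by (simp add: density_distr)
  then show "distr (density lborel p) borel (\<lambda>x. u + f (x - u)) = density lborel p"
    by (simp add: isotropic_about_lborel[unfolded isotropic_about_def, rule_format, OF f])
qed

lemma integral_isotropic_about:
  fixes g :: "'a::euclidean_space \<Rightarrow> 'b::{banach, second_countable_topology}"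
  assumes M: "isotropic_about u M" and f: "orthogonal_transformation f"
    and g: "g \<in> borel_measurable borel"
  shows "(\<integral>x. g (u + f (x - u)) \<partial>M) = (\<integral>x. g x \<partial>M)"
proof -
  have [measurable]: "f \<in> borel_measurable borel"
    using f by (rule borel_measurable_orthogonal_transformation)
  have "(\<lambda>x. u + f (x - u)) \<in> borel_measurable M"
    using sets_isotropic_about[OF M] by (simp cong: measurable_cong_sets)
  then have "(\<integral>x. g (u + f (x - u)) \<partial>M) = (\<integral>x. g x \<partial>distr M borel (\<lambda>x. u + f (x - u)))"
    using g by (simp add: integral_distr)
  then show ?thesis
    using M f by (simp add: isotropic_about_def)
qed

lemma integrable_inner_clip:
  fixes M :: "'a::euclidean_space measure" and g :: "'a \<Rightarrow> 'a"
  assumes "finite_measure M" "sets M = sets borel" "g \<in> borel_measurable borel"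
  shows "integrable M (\<lambda>y. inner w (clip (g y) c))"
proof (rule finite_measure.integrable_const_bound[OF assms(1)])
  have "(\<lambda>y. inner w (clip (g y) c)) \<in> borel_measurable borel"
    by (rule measurable_compose[OF assms(3)]) measurable
  then show "(\<lambda>y. inner w (clip (g y) c)) \<in> borel_measurable M"
    using assms(2) by (simp cong: measurable_cong_sets)
  have "\<bar>inner w (clip x c)\<bar> \<le> norm w * \<bar>c\<bar>" for x
    using Cauchy_Schwarz_ineq2[of w "clip x c"] norm_clip_le[of x c]
    by (meson mult_left_mono norm_ge_zero order_trans)
  then show "AE y in M. norm (inner w (clip (g y) c)) \<le> norm w * \<bar>c\<bar>"
    by simp
qed

lemma integral_inner_clip_self_ge:
  fixes M :: "'a::euclidean_space measure"
  assumes M: "finite_measure M" "isotropic_about u M" and c: "0 \<le> c"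
  shows "norm u * min (norm u) (3/4 * c) * measure M (ball u (c / 4)) \<le> (\<integral>y. inner u (clip y c) \<partial>M)"
proof -
  have sets: "sets M = sets borel"
    using M(2) by (rule sets_isotropic_about)
  have ball: "ball u (c / 4) \<in> sets M"
    using sets by simp
  have point_reflection: "orthogonal_transformation (\<lambda>x. - x)"
    by (simp add: orthogonal_transformation_neg)
  let ?J = "\<integral>y. inner u (clip y c) \<partial>M"
  let ?J' = "\<integral>y. inner u (clip (u - (y - u)) c) \<partial>M"
  have "?J' = ?J"
    using integral_isotropic_about[OF M(2) point_reflection, of "\<lambda>y. inner u (clip y c)"]
    by (simp add: algebra_simps)
  have "2 * norm u * min (norm u) (3/4 * c) * measure M (ball u (c / 4))
      = (\<integral>y. 2 * norm u * min (norm u) (3/4 * c) * indicator (ball u (c / 4)) y \<partial>M)"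
    using M(1) ball by (simp add: finite_measure.emeasure_finite less_top[symmetric])
  also have "\<dots> \<le> (\<integral>y. inner u (clip y c) + inner u (clip (u - (y - u)) c) \<partial>M)"
  proof (rule integral_mono)
    show "integrable M (\<lambda>y. 2 * norm u * min (norm u) (3/4 * c) * indicator (ball u (c / 4)) y)"
      using M(1) ball by (simp add: finite_measure.emeasure_finite less_top[symmetric])
    show "integrable M (\<lambda>y. inner u (clip y c) + inner u (clip (u - (y - u)) c))"
      using integrable_inner_clip[OF M(1) sets, of "\<lambda>y. y"] integrable_inner_clip[OF M(1) sets, of "\<lambda>y. u - (y - u)"]
      by simp
    fix y
    show "2 * norm u * min (norm u) (3/4 * c) * indicator (ball u (c / 4)) y
        \<le> inner u (clip y c) + inner u (clip (u - (y - u)) c)"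
      using inner_clip_add_diff_nonneg[OF c, of u "y - u"] inner_clip_add_diff_ge[of "y - u" c u]
      by (auto simp: indicator_def dist_norm norm_minus_commute)
  qed
  also have "\<dots> = 2 * ?J"
    using integrable_inner_clip[OF M(1) sets, of "\<lambda>y. y"] integrable_inner_clip[OF M(1) sets, of "\<lambda>y. u - (y - u)"]
      \<open>?J' = ?J\<close> by simp
  finally show ?thesis
    by simp
qed

lemma integral_inner_clip_projection:
  fixes M :: "'a::euclidean_space measure"
  assumes M: "finite_measure M" "isotropic_about u M"
  shows "(\<integral>y. inner v (clip y c) \<partial>M) = inner u v / (norm u)\<^sup>2 * (\<integral>y. inner u (clip y c) \<partial>M)"
proof -
  define J where "J w = (\<integral>y. inner w (clip y c) \<partial>M)" for w
  have sets: "sets M = sets borel"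
    using M(2) by (rule sets_isotropic_about)
  have J_add: "J (w + w') = J w + J w'" for w w'
    using integrable_inner_clip[OF M(1) sets, of "\<lambda>y. y"] by (simp add: J_def inner_add_left)
  have J_scale: "J (a *\<^sub>R w) = a * J w" for a w
    by (simp add: J_def)
  let ?H = "line_reflection u"
  have H: "orthogonal_transformation ?H"
    by (rule orthogonal_transformation_line_reflection)
  have "u + ?H (y - u) = ?H y" for y
    using linear_diff[OF orthogonal_transformation_linear[OF H]] by (simp add: line_reflection_self)
  then have "J v = J (?H v)"
    using integral_isotropic_about[OF M(2) H, of "\<lambda>y. inner v (clip y c)"]
    by (simp add: J_def clip_orthogonal_transformation[OF H] inner_line_reflection_commute)
  then have "2 * J v = J (v + ?H v)"
    by (simp add: J_add)
  also have "\<dots> = 2 * (inner u v / (norm u)\<^sup>2 * J u)"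
    by (simp add: add_line_reflection J_scale inner_commute)
  finally show ?thesis
    by (simp add: J_def)
qed

lemma norm_mult_vcos: "norm v * vcos v u = inner u v / norm u"
  by (simp add: vcos_def inner_commute)

lemma integral_inner_clip_ge:
  fixes M :: "'a::euclidean_space measure"
  assumes M: "finite_measure M" "isotropic_about u M" and c: "0 \<le> c" and uv: "0 \<le> inner u v"
  shows "norm v * min (norm u) (3/4 * c) * vcos v u * measure M (ball u (c / 4))
           \<le> (\<integral>y. inner v (clip y c) \<partial>M)"
proof -
  let ?m = "min (norm u) (3/4 * c)" and ?P = "measure M (ball u (c / 4))"
  have "norm v * ?m * vcos v u * ?P = (norm v * vcos v u) * (?m * ?P)"
    by (simp only: mult_ac)
  also have "norm v * vcos v u = inner u v / (norm u)\<^sup>2 * norm u"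
    by (cases "u = 0") (simp_all add: norm_mult_vcos power2_eq_square field_simps)
  also have "inner u v / (norm u)\<^sup>2 * norm u * (?m * ?P) = inner u v / (norm u)\<^sup>2 * (norm u * ?m * ?P)"
    by (simp only: mult_ac)
  also have "\<dots> \<le> inner u v / (norm u)\<^sup>2 * (\<integral>y. inner u (clip y c) \<partial>M)"
    using integral_inner_clip_self_ge[OF M c] by (rule mult_left_mono) (use uv in simp)
  also have "\<dots> = (\<integral>y. inner v (clip y c) \<partial>M)"
    by (rule integral_inner_clip_projection[OF M, symmetric])
  finally show ?thesis .
qed

lemma integral_radial_density_inner_clip:
  fixes p :: "'a::euclidean_space \<Rightarrow> real"
  assumes p_meas: "p \<in> borel_measurable borel" and p_nonneg: "\<And>y. 0 \<le> p y"
    and p_finite: "(\<integral>\<^sup>+y. ennreal (p y) \<partial>lborel) \<noteq> \<infinity>"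
    and radial: "\<And>y. p y = \<phi> (norm (y - u))"
    and c: "0 \<le> c" and uv: "0 \<le> inner u v"
  shows "integrable lborel (\<lambda>y. p y * inner v (clip y c))"
    and "norm v * min (norm u) (3/4 * c) * vcos v u *
           measure (density lborel (\<lambda>y. ennreal (p y))) {y. norm (y - u) < c / 4}
         \<le> (\<integral>y. p y * inner v (clip y c) \<partial>lborel)"
proof -
  define M where "M = density lborel (\<lambda>y. ennreal (p y))"
  have [measurable]: "p \<in> borel_measurable borel"
    by (fact p_meas)
  have iso: "isotropic_about u M"
    unfolding M_def
    by (rule isotropic_about_radial_density[where \<phi>="\<lambda>r. ennreal (\<phi> r)"]) (measurable, simp add: radial)
  have fin: "finite_measure M"
    using p_finite by (intro finite_measureI) (simp add: M_def emeasure_density)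
  have int: "integrable M (\<lambda>y. inner v (clip y c))"
    using integrable_inner_clip[OF fin sets_isotropic_about[OF iso], of "\<lambda>y. y"] by simp
  then show "integrable lborel (\<lambda>y. p y * inner v (clip y c))"
    using p_nonneg by (simp add: M_def integrable_density)
  have "{y. norm (y - u) < c / 4} = ball u (c / 4)"
    by (auto simp: dist_norm norm_minus_commute)
  moreover have "(\<integral>y. inner v (clip y c) \<partial>M) = (\<integral>y. p y * inner v (clip y c) \<partial>lborel)"
    using p_nonneg by (simp add: M_def integral_density)
  ultimately show "norm v * min (norm u) (3/4 * c) * vcos v u *
           measure (density lborel (\<lambda>y. ennreal (p y))) {y. norm (y - u) < c / 4}
         \<le> (\<integral>y. p y * inner v (clip y c) \<partial>lborel)"
    using integral_inner_clip_ge[OF fin iso c uv] by (simp add: M_def)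
qed

lemma integral_translated_mixture:
  fixes p :: "nat \<Rightarrow> 'a::euclidean_space \<Rightarrow> real" and g :: "'a \<Rightarrow> real"
  assumes int: "\<And>i. i < m \<Longrightarrow> integrable lborel (\<lambda>y. p i y * g y)"
  shows "(\<integral>\<xi>. (\<Sum>i<m. w i * p i (\<xi> + v)) * g (v + \<xi>) \<partial>lborel)
           = (\<Sum>i<m. w i * (\<integral>y. p i y * g y \<partial>lborel))"
proof -
  define F where "F y = (\<Sum>i<m. w i * (p i y * g y))" for y
  have "integrable lborel F"
    unfolding F_def by (intro Bochner_Integration.integrable_sum integrable_mult_right) (simp add: int)
  then have "F \<in> borel_measurable borel"
    by (simp add: borel_measurable_integrable)
  then have "(\<integral>\<xi>. F (v + \<xi>) \<partial>lborel) = (\<integral>y. F y \<partial>lborel)"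
    using integral_distr[of "(+) v" lborel borel F] by (simp add: lborel_distr_plus)
  then show ?thesis
    using int by (simp add: F_def sum_distrib_right mult.assoc add.commute integral_sum)
qed

theorem theorem3:
  fixes c :: real and v :: "'a::euclidean_space" and m :: nat
    and u :: "nat \<Rightarrow> 'a" and p :: "nat \<Rightarrow> 'a \<Rightarrow> real"
    and \<phi> :: "nat \<Rightarrow> real \<Rightarrow> real" and w :: "nat \<Rightarrow> real"
  assumes c_pos: "c > 0"
    and p_meas: "\<And>i. i < m \<Longrightarrow> p i \<in> borel_measurable lborel"
    and p_nonneg: "\<And>i y. i < m \<Longrightarrow> p i y \<ge> 0"
    and p_int1: "\<And>i. i < m \<Longrightarrow> (\<integral>\<^sup>+ y. ennreal (p i y) \<partial>lborel) = 1"
    and p_radial: "\<And>i y. i < m \<Longrightarrow> p i y = \<phi> i (norm (y - u i))"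
    and w_nonneg: "\<And>i. i < m \<Longrightarrow> w i \<ge> 0"
    and w_sum: "(\<Sum>i<m. w i) = 1"
    and v_eq: "v = (\<Sum>i<m. w i *\<^sub>R u i)"
    and inner_nonneg: "\<And>i. i < m \<Longrightarrow> inner (u i) v \<ge> 0"
  shows "(\<integral>\<xi>. (\<Sum>i<m. w i * p i (\<xi> + v)) * inner v (clip (v + \<xi>) c) \<partial>lborel)
           \<ge> norm v * (\<Sum>i<m. w i * min (norm (u i)) (3/4 * c) * vcos v (u i) *
                 measure (density lborel (\<lambda>y. ennreal (p i y))) {y. norm (y - u i) < c / 4})
       \<and> norm v * (\<Sum>i<m. w i * min (norm (u i)) (3/4 * c) * vcos v (u i) *
                 measure (density lborel (\<lambda>y. ennreal (p i y))) {y. norm (y - u i) < c / 4}) \<ge> 0"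
proof -
  define T where "T i = norm v * min (norm (u i)) (3/4 * c) * vcos v (u i) *
    measure (density lborel (\<lambda>y. ennreal (p i y))) {y. norm (y - u i) < c / 4}" for i
  have component: "integrable lborel (\<lambda>y. p i y * inner v (clip y c))"
      "T i \<le> (\<integral>y. p i y * inner v (clip y c) \<partial>lborel)" if "i < m" for i
    using integral_radial_density_inner_clip[of "p i" "\<phi> i" "u i" c v] p_meas[OF that]
      p_nonneg[OF that] p_int1[OF that] p_radial[OF that] c_pos inner_nonneg[OF that]
    by (simp_all add: T_def)
  have T_nonneg: "0 \<le> T i" if "i < m" for i
    using c_pos inner_nonneg[OF that] by (simp add: T_def vcos_def inner_commute)
  have "(\<integral>\<xi>. (\<Sum>i<m. w i * p i (\<xi> + v)) * inner v (clip (v + \<xi>) c) \<partial>lborel)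
      = (\<Sum>i<m. w i * (\<integral>y. p i y * inner v (clip y c) \<partial>lborel))"
    using component(1) by (rule integral_translated_mixture)
  moreover have "norm v * (\<Sum>i<m. w i * min (norm (u i)) (3/4 * c) * vcos v (u i) *
      measure (density lborel (\<lambda>y. ennreal (p i y))) {y. norm (y - u i) < c / 4}) = (\<Sum>i<m. w i * T i)"
    by (simp add: T_def sum_distrib_left mult_ac)
  ultimately show ?thesis
    using component(2) T_nonneg w_nonneg by (auto intro!: sum_mono sum_nonneg mult_left_mono)
qed

end
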